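(* Let $v_\eta(x,t)$ be a feed-forward neural network with input $(x,t)\in\mathbb{R}^d\times\mathbb{R}$ and constant parameters $\eta=(w_l,b_l,W_{l-1},\dots,W_0,w_0,b_0)$, of the form $v_\eta(x,t)=w_l^\top h_{l-1}(x,t)+b_l$, where $h_\ell(x,t)=\sigma(W_\ell h_{\ell-1}(x,t)+b_\ell)$ for $\ell=1,\dots,l-1$ and $h_0(x,t)=\sigma(W_0x+w_0t+b_0)$, with $\sigma$ an activation function applied componentwise. Then there exist a feed-forward neural network $u_\theta(x)$ with input $x\in\mathbb{R}^d$ and parameters $\theta$, and a differentiable curve $t\mapsto\theta(t)$, such that $u_{\theta(t)}(x)=v_\eta(x,t)$ for all $x\in\mathbb{R}^d$ and $t\in\mathbb{R}$. *)

theory Defs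
  imports Complex_Main
begin

(* Vectors in R^n are functions nat => real (only coordinates < n matter);
   matrices are nat => nat => real; a family of layer matrices/biases is
   indexed by the layer number.  ns = [n_0, ..., n_{l-1}] are hidden widths. *)

fun hid :: "(real \<Rightarrow> real) \<Rightarrow> nat list \<Rightarrow> (nat \<Rightarrow> nat \<Rightarrow> nat \<Rightarrow> real)
             \<Rightarrow> (nat \<Rightarrow> nat \<Rightarrow> real) \<Rightarrow> (nat \<Rightarrow> real) \<Rightarrow> nat \<Rightarrow> (nat \<Rightarrow> real)" where
  "hid \<sigma> ns W b h0 0 = h0"
| "hid \<sigma> ns W b h0 (Suc k) =
     (\<lambda>i. \<sigma> ((\<Sum>j<ns ! k. W (Suc k) i j * hid \<sigma> ns W b h0 k j) + b (Suc k) i))"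

definition ffn :: "(real \<Rightarrow> real) \<Rightarrow> nat \<Rightarrow> nat list \<Rightarrow> (nat \<Rightarrow> nat \<Rightarrow> nat \<Rightarrow> real)
             \<Rightarrow> (nat \<Rightarrow> nat \<Rightarrow> real) \<Rightarrow> (nat \<Rightarrow> real) \<Rightarrow> real \<Rightarrow> (nat \<Rightarrow> real) \<Rightarrow> real" where
  "ffn \<sigma> d ns W b w c x =
     (\<Sum>i<last ns. w i * hid \<sigma> ns W b
         (\<lambda>i. \<sigma> ((\<Sum>j<d. W 0 i j * x j) + b 0 i)) (length ns - 1) i) + c"

definition tffn :: "(real \<Rightarrow> real) \<Rightarrow> nat \<Rightarrow> nat list \<Rightarrow> (nat \<Rightarrow> nat \<Rightarrow> nat \<Rightarrow> real)
             \<Rightarrow> (nat \<Rightarrow> nat \<Rightarrow> real) \<Rightarrow> (nat \<Rightarrow> real) \<Rightarrow> (nat \<Rightarrow> real) \<Rightarrow> real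
             \<Rightarrow> (nat \<Rightarrow> real) \<Rightarrow> real \<Rightarrow> real" where
  "tffn \<sigma> d ns W b w0 wl bl x t =
     (\<Sum>i<last ns. wl i * hid \<sigma> ns W b
         (\<lambda>i. \<sigma> ((\<Sum>j<d. W 0 i j * x j) + w0 i * t + b 0 i)) (length ns - 1) i) + bl"

end

theory Submission
  imports Defs
begin

(* The time input t enters v only through W_0 x + w_0 t + b_0, so it can be absorbed
   into the first bias: b_0(t) = b_0 + w_0 t is affine, hence differentiable, in t,
   and all other parameters stay constant. *)

definition time_shifted_bias ::
    "(nat \<Rightarrow> nat \<Rightarrow> real) \<Rightarrow> (nat \<Rightarrow> real) \<Rightarrow> real \<Rightarrow> nat \<Rightarrow> nat \<Rightarrow> real" where
  "time_shifted_bias b w0 t = b(0 := (\<lambda>i. b 0 i + w0 i * t))"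

lemma hid_fun_upd_bias_0: "hid \<sigma> ns W (b(0 := c)) h0 k = hid \<sigma> ns W b h0 k"
  by (induction k) auto

lemma ffn_time_shifted_bias:
  "ffn \<sigma> d ns W (time_shifted_bias b w0 t) wl bl x = tffn \<sigma> d ns W b w0 wl bl x t"
  unfolding ffn_def tffn_def time_shifted_bias_def hid_fun_upd_bias_0
  by (simp add: add.assoc add.commute add.left_commute)

lemma time_shifted_bias_differentiable:
  "(\<lambda>s. time_shifted_bias b w0 s k i) differentiable (at t)"
  unfolding time_shifted_bias_def by (cases k) (auto intro!: derivative_intros)

theorem lemmaA1:
  fixes \<sigma> :: "real \<Rightarrow> real" and d :: nat and ns :: "nat list"
    and W :: "nat \<Rightarrow> nat \<Rightarrow> nat \<Rightarrow> real" and b :: "nat \<Rightarrow> nat \<Rightarrow> real"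
    and w0 :: "nat \<Rightarrow> real" and wl :: "nat \<Rightarrow> real" and bl :: real
  assumes "ns \<noteq> []"
  shows "\<exists>(ns' :: nat list) (Wt :: real \<Rightarrow> nat \<Rightarrow> nat \<Rightarrow> nat \<Rightarrow> real)
            (bt :: real \<Rightarrow> nat \<Rightarrow> nat \<Rightarrow> real) (wt :: real \<Rightarrow> nat \<Rightarrow> real) (ct :: real \<Rightarrow> real).
           ns' \<noteq> [] \<and>
           (\<forall>k i j. k < length ns' \<and> i < ns' ! k \<and> j < (d # ns') ! k \<longrightarrow>
              (\<forall>t. (\<lambda>s. Wt s k i j) differentiable (at t))) \<and>
           (\<forall>k i. k < length ns' \<and> i < ns' ! k \<longrightarrow>
              (\<forall>t. (\<lambda>s. bt s k i) differentiable (at t))) \<and>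
           (\<forall>i < last ns'. \<forall>t. (\<lambda>s. wt s i) differentiable (at t)) \<and>
           (\<forall>t. ct differentiable (at t)) \<and>
           (\<forall>x t. ffn \<sigma> d ns' (Wt t) (bt t) (wt t) (ct t) x = tffn \<sigma> d ns W b w0 wl bl x t)"
  using assms time_shifted_bias_differentiable ffn_time_shifted_bias
  by (intro exI[of _ ns] exI[of _ "\<lambda>_. W"] exI[of _ "time_shifted_bias b w0"]
        exI[of _ "\<lambda>_. wl"] exI[of _ "\<lambda>_. bl"]) auto

end
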